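(* Let $S\colon[0,1]\to\mathfrak S_1(\mathbb T)$ be a continuous path with $S(0)=\mathbf 1$, let $\tilde S\colon[0,1]\to\mathfrak S_1(\mathbb R)$ be a continuous lift of $S$ with $\tilde S(0)=\mathbf 0$, and let $\theta_1(\cdot),\theta_2(\cdot),\dots$ be a continuous enumeration of $\tilde S$. Then the function $\theta\mapsto\mu(\theta;S)$ is summable on $(0,2\pi)$ and $$\int_0^{2\pi}\mu(\theta;S)\,d\theta=\sum_{j=1}^\infty\theta_j(1).$$
   Context: Rigged sets: each point has a multiplicity in $\{0,1,\dots,\infty\}$; an enumeration lists each point according to its multiplicity. For a metric space $X$ with base point $x_0$, $\mathfrak S_1(X)$ is the set of countable rigged subsets of $X$ with $x_0$ of infinite multiplicity, no other accumulation point, and $d(S,\mathbf x_0)<\infty$, where $d(S,T)=\inf\sum_j\mathrm{dist}(s_j,t_j)$ over enumerations; $\mathfrak S_1(\mathbb T)$ has base point $1$ (arc-length metric), $\mathfrak S_1(\mathbb R)$ base point $0$; $\mathbf 1$, $\mathbf 0$ are the base points with infinite multiplicity. A lift of $S$ is $\tilde S$ with $p\circ\tilde S=S$, where $p$ is induced by $\theta\mapsto e^{i\theta}$. A continuous enumeration of $\tilde S$ is a sequence of continuous real functions $\theta_j$ such that for each $r$ the rigged set $\{\theta_j(r)\}$ together with $0$ of infinite multiplicity equals $\tilde S(r)$. For $\theta\in(0,2\pi)$, $\theta_1<\theta_2$: $[\theta;\theta_1,\theta_2]=\frac12(\#\{k\in\mathbb Z:\theta_1<\theta+2\pi k<\theta_2\}+\#\{k\in\mathbb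 Z:\theta_1\le\theta+2\pi k\le\theta_2\})$, antisymmetric in $(\theta_1,\theta_2)$. $\mu(\theta;S)=\sum_j[\theta;\theta_j(0),\theta_j(1)]$ (independent of the choice of lift and enumeration). *)

theory Defs
  imports "HOL-Analysis.Analysis" "HOL-Library.Extended_Nat"
begin

text \<open>Rigged sets: a rigged subset of a type is a multiplicity function into enat
  (\<infinity> = infinite multiplicity).\<close>

type_synonym 'a rigged = "'a \<Rightarrow> enat"

definition ecount :: "(nat \<Rightarrow> 'a) \<Rightarrow> 'a \<Rightarrow> enat" where
  "ecount s x = (if finite {j. s j = x} then enat (card {j. s j = x}) else \<infinity>)"

definition is_enum :: "'a rigged \<Rightarrow> (nat \<Rightarrow> 'a) \<Rightarrow> bool" where
  "is_enum M s \<longleftrightarrow> (\<forall>x. M x = ecount s x)"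

definition base :: "'a \<Rightarrow> 'a rigged" where
  "base x0 = (\<lambda>x. if x = x0 then \<infinity> else 0)"

definition rdist :: "('a \<Rightarrow> 'a \<Rightarrow> real) \<Rightarrow> 'a rigged \<Rightarrow> 'a rigged \<Rightarrow> ennreal" where
  "rdist \<delta> M N = (INF st \<in> {(s, t). is_enum M s \<and> is_enum N t}.
      (\<Sum>j. ennreal (\<delta> (fst st j) (snd st j))))"

definition S1 :: "'a::topological_space set \<Rightarrow> ('a \<Rightarrow> 'a \<Rightarrow> real) \<Rightarrow> 'a \<Rightarrow> 'a rigged set" where
  "S1 X \<delta> x0 = {M. (\<forall>x. x \<notin> X \<longrightarrow> M x = 0)
     \<and> countable {x. M x \<noteq> 0}
     \<and> M x0 = \<infinity>
     \<and> (\<forall>x. x \<noteq> x0 \<longrightarrow> M x \<noteq> \<infinity> \<and> \<not> (x islimpt {y. M y \<noteq> 0}))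
     \<and> rdist \<delta> M (base x0) < \<infinity>}"

definition arcdist :: "complex \<Rightarrow> complex \<Rightarrow> real" where
  "arcdist z w = \<bar>Arg (z / w)\<bar>"

definition S1_T :: "complex rigged set" where
  "S1_T = S1 (sphere 0 1) arcdist 1"

definition S1_R :: "real rigged set" where
  "S1_R = S1 UNIV dist 0"

definition rpath :: "'a::topological_space rigged set \<Rightarrow> ('a \<Rightarrow> 'a \<Rightarrow> real)
    \<Rightarrow> (real \<Rightarrow> 'a rigged) \<Rightarrow> bool" where
  "rpath Sp \<delta> P \<longleftrightarrow> (\<forall>r\<in>{0..1}. P r \<in> Sp) \<and>
     (\<forall>r\<in>{0..1}. \<forall>e>0. \<exists>d>0. \<forall>r'\<in>{0..1}. \<bar>r' - r\<bar> < d \<longrightarrow> rdist \<delta> (P r') (P r) < ennreal e)"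

definition pmap :: "real rigged \<Rightarrow> complex rigged" where
  "pmap M z = (SUP F \<in> {F. finite F \<and> F \<subseteq> {\<theta>. cis \<theta> = z}}. \<Sum>\<theta>\<in>F. M \<theta>)"

definition cont_enum :: "(real \<Rightarrow> real rigged) \<Rightarrow> (nat \<Rightarrow> real \<Rightarrow> real) \<Rightarrow> bool" where
  "cont_enum St th \<longleftrightarrow> (\<forall>j. continuous_on {0..1} (th j)) \<and>
     (\<forall>r\<in>{0..1}. \<forall>x. St r x = ecount (\<lambda>j. th j r) x + (if x = 0 then \<infinity> else 0))"

definition bracket0 :: "real \<Rightarrow> real \<Rightarrow> real \<Rightarrow> real" where
  "bracket0 \<theta> a b = (real (card {k::int. a < \<theta> + 2*pi*k \<and> \<theta> + 2*pi*k < b})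
       + real (card {k::int. a \<le> \<theta> + 2*pi*k \<and> \<theta> + 2*pi*k \<le> b})) / 2"

definition bracket :: "real \<Rightarrow> real \<Rightarrow> real \<Rightarrow> real" where
  "bracket \<theta> a b = (if a < b then bracket0 \<theta> a b else if b < a then - bracket0 \<theta> b a else 0)"

definition mu :: "(nat \<Rightarrow> real \<Rightarrow> real) \<Rightarrow> real \<Rightarrow> real" where
  "mu th \<theta> = (\<Sum>j. bracket \<theta> (th j 0) (th j 1))"

end

theory Submission
  imports Defs
begin

text \<open>For fixed \<open>b\<close>, the bracket \<open>[\<theta>; 0, b]\<close> counts (signed, endpoints with weight one half)
  the translates \<open>\<theta> + 2\<pi>k\<close> lying between \<open>0\<close> and \<open>b\<close>. Since the translates of \<open>(0, 2\<pi>)\<close> tile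
  the line up to a null set, its integral over one period is \<open>b\<close>, and the integral of its absolute
  value is \<open>|b|\<close>. The enumeration starts at \<open>0\<close>, and the finite distance of \<open>S\<^sup>~(1)\<close> from the base
  point makes \<open>\<Sum> |\<theta>\<^sub>j(1)|\<close> finite; so the series defining \<open>\<mu>\<close> converges in \<open>L\<^sup>1\<close> (for each
  \<open>\<theta> \<in> (0, 2\<pi>)\<close> only finitely many terms are nonzero) and can be integrated term by term.\<close>

text \<open>\<open>clip x\<close> is the length of \<open>{0<..<2*pi} \<inter> {..x}\<close>.\<close>

definition clip :: "real \<Rightarrow> real" where
  "clip x = max 0 (min (2*pi) x)"

lemma sum_clip_translates:
  fixes m M :: int
  assumes "m \<le> M"
  shows "(\<Sum>k\<in>{m..<M}. clip (x - 2*pi*k)) = max (2*pi*m) (min (2*pi*M) x) - 2*pi*m"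
  using assms
proof (induction M rule: int_ge_induct)
  case base
  then show ?case by simp
next
  case (step M)
  have "{m..<M+1} = insert M {m..<M}" using step.hyps by auto
  then have "(\<Sum>k\<in>{m..<M+1}. clip (x - 2*pi*k))
      = clip (x - 2*pi*M) + (max (2*pi*m) (min (2*pi*M) x) - 2*pi*m)"
    using step.IH by simp
  also have "\<dots> = max (2*pi*m) (min (2*pi*(M+1)) x) - 2*pi*m"
  proof -
    have "2*pi*m \<le> 2*pi*M" using step.hyps by simp
    then show ?thesis unfolding clip_def of_int_add of_int_1 distrib_left mult_1_right
      using pi_gt_zero by (smt (verit))
  qed
  finally show ?case .
qed

lemma lebesgue_sets_between_Ioo_Icc:
  fixes J :: "real set"
  assumes "{a<..<b} \<subseteq> J" "J \<subseteq> {a..b}"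
  shows "J \<in> sets lebesgue"
proof -
  have "J = {a<..<b} \<union> (J \<inter> {a, b})" using assms by auto
  moreover have "J \<inter> {a, b} \<in> null_sets lebesgue"
    using finite_imp_null_set_lborel[of "J \<inter> {a, b}"] null_sets_completionI by blast
  ultimately show ?thesis
    by (metis null_setsD2 sets.Un sets_completionI_sets greaterThanLessThan_borel sets_lborel)
qed

lemma measure_period_Int_between_Ioo_Icc:
  fixes J :: "real set"
  assumes "a \<le> b" "{a<..<b} \<subseteq> J" "J \<subseteq> {a..b}"
  shows "measure lebesgue ({0<..<2*pi} \<inter> J) = clip b - clip a"
proof -
  have inner: "{max 0 a<..<min (2*pi) b} \<subseteq> {0<..<2*pi} \<inter> J"
   and outer: "{0<..<2*pi} \<inter> J \<subseteq> {max 0 a..min (2*pi) b}" using assms(2,3) by auto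
  have J: "{0<..<2*pi} \<inter> J \<in> lmeasurable"
    by (intro fmeasurable_Int_fmeasurable lebesgue_sets_between_Ioo_Icc[OF assms(2,3)]) auto
  show ?thesis
  proof (cases "max 0 a \<le> min (2*pi) b")
    case True
    have "measure lebesgue {max 0 a<..<min (2*pi) b} \<le> measure lebesgue ({0<..<2*pi} \<inter> J)"
      using inner J by (intro measure_mono_fmeasurable) auto
    moreover have "measure lebesgue ({0<..<2*pi} \<inter> J) \<le> measure lebesgue {max 0 a..min (2*pi) b}"
      using outer J by (intro measure_mono_fmeasurable) auto
    ultimately show ?thesis using True assms(1) by (simp add: clip_def)
  next
    case False
    then have "{0<..<2*pi} \<inter> J = {}" using outer by auto
    then show ?thesis using False assms(1) pi_gt_zero by (auto simp: clip_def)
  qed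
qed

lemma card_translates_eq_sum_indicator:
  fixes I :: "real set" and m M :: int
  assumes "0 \<le> \<theta>" "\<theta> \<le> 2*pi" "I \<subseteq> {a..b}" "2*pi*m \<le> a - 2*pi" "b < 2*pi*M"
  shows "real (card {k::int. \<theta> + 2*pi*k \<in> I})
    = (\<Sum>k\<in>{m..<M}. indicator {x. x + 2*pi*k \<in> I} \<theta>)"
proof -
  have "m \<le> k \<and> k < M" if "\<theta> + 2*pi*k \<in> I" for k :: int
  proof -
    have "a \<le> \<theta> + 2*pi*k" "\<theta> + 2*pi*k \<le> b" using that assms(3) by auto
    then have "2*pi*m \<le> 2*pi*k" "2*pi*k < 2*pi*M" using assms by linarith+
    then show ?thesis using pi_gt_zero by simp
  qed
  then have "{k::int. \<theta> + 2*pi*k \<in> I} = {m..<M} \<inter> {k. \<theta> + 2*pi*k \<in> I}" by auto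
  then show ?thesis by (simp add: indicator_def sum_of_bool_eq)
qed

lemma integral_card_translates:
  fixes I :: "real set"
  assumes "a \<le> b" "{a<..<b} \<subseteq> I" "I \<subseteq> {a..b}"
  shows "set_integrable lebesgue {0<..<2*pi} (\<lambda>\<theta>. real (card {k::int. \<theta> + 2*pi*k \<in> I}))"
    and "(LINT \<theta>:{0<..<2*pi}|lebesgue. real (card {k::int. \<theta> + 2*pi*k \<in> I})) = b - a"
proof -
  define A where "A = {0<..<2*pi::real}"
  define T where "T k = {x. x + 2*pi*k \<in> I}" for k :: int
  obtain m :: int where m: "of_int m < a/(2*pi) - 1" using ex_of_int_less by blast
  obtain M :: int where M: "b/(2*pi) < of_int M" using ex_less_of_int by blast
  have am: "2*pi*m \<le> a - 2*pi" and bM: "b < 2*pi*M"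
    using m M pi_gt_zero by (auto simp: field_simps)
  have "m \<le> M"
    using am bM assms(1) pi_gt_zero by (smt (verit) mult_less_cancel_left_pos of_int_less_iff)
  have T: "{a - 2*pi*k<..<b - 2*pi*k} \<subseteq> T k" "T k \<subseteq> {a - 2*pi*k..b - 2*pi*k}" for k
    using assms(2,3) by (auto simp: T_def subset_iff algebra_simps)
  have AT: "A \<inter> T k \<in> lmeasurable" for k
    unfolding A_def by (intro fmeasurable_Int_fmeasurable lebesgue_sets_between_Ioo_Icc[OF T]) auto
  have F: "indicator A \<theta> *\<^sub>R real (card {k::int. \<theta> + 2*pi*k \<in> I})
      = (\<Sum>k\<in>{m..<M}. indicator (A \<inter> T k) \<theta>)" for \<theta>
    using card_translates_eq_sum_indicator[OF _ _ assms(3) am bM, of \<theta>]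
    by (cases "\<theta> \<in> A") (auto simp: A_def T_def indicator_inter_arith)
  show "set_integrable lebesgue {0<..<2*pi} (\<lambda>\<theta>. real (card {k::int. \<theta> + 2*pi*k \<in> I}))"
    unfolding set_integrable_def A_def[symmetric] F
    using AT by (simp add: lmeasurable_iff_integrable)
  have "(LINT \<theta>:A|lebesgue. real (card {k::int. \<theta> + 2*pi*k \<in> I}))
      = (\<Sum>k\<in>{m..<M}. measure lebesgue (A \<inter> T k))"
    unfolding set_lebesgue_integral_def F
    using AT by (subst Bochner_Integration.integral_sum) (auto simp: lmeasurable_iff_integrable)
  also have "\<dots> = (\<Sum>k\<in>{m..<M}. clip (b - 2*pi*k) - clip (a - 2*pi*k))"
    unfolding A_def using assms(1) by (intro sum.cong refl measure_period_Int_between_Ioo_Icc T) auto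
  also have "\<dots> = b - a"
    using sum_clip_translates[OF \<open>m \<le> M\<close>, of a] sum_clip_translates[OF \<open>m \<le> M\<close>, of b]
      am bM assms(1) pi_gt_zero
    by (simp add: sum_subtractf max_def)
  finally show "(LINT \<theta>:{0<..<2*pi}|lebesgue. real (card {k::int. \<theta> + 2*pi*k \<in> I})) = b - a"
    by (simp add: A_def)
qed

lemma bracket0_integral:
  assumes "a \<le> b"
  shows "set_integrable lebesgue {0<..<2*pi} (\<lambda>\<theta>. bracket0 \<theta> a b)"
    and "(LINT \<theta>:{0<..<2*pi}|lebesgue. bracket0 \<theta> a b) = b - a"
proof -
  have eq: "bracket0 \<theta> a b = (real (card {k::int. \<theta> + 2*pi*k \<in> {a<..<b}})
      + real (card {k::int. \<theta> + 2*pi*k \<in> {a..b}})) / 2" for \<theta>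
    by (simp add: bracket0_def)
  have "{a<..<b} \<subseteq> {a..b}" by auto
  note Ioo = integral_card_translates[OF assms subset_refl this]
   and Icc = integral_card_translates[OF assms this subset_refl]
  show "set_integrable lebesgue {0<..<2*pi} (\<lambda>\<theta>. bracket0 \<theta> a b)"
    unfolding eq using Ioo Icc by (intro set_integrable_divide set_integral_add) auto
  show "(LINT \<theta>:{0<..<2*pi}|lebesgue. bracket0 \<theta> a b) = b - a"
    unfolding eq set_integral_divide_zero using Ioo Icc by (subst set_integral_add) auto
qed

lemma bracket0_nonneg: "0 \<le> bracket0 \<theta> a b"
  by (simp add: bracket0_def)

lemma bracket_integral:
  shows "set_integrable lebesgue {0<..<2*pi} (\<lambda>\<theta>. bracket \<theta> a b)"
    and "(LINT \<theta>:{0<..<2*pi}|lebesgue. bracket \<theta> a b) = b - a"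
    and "(LINT \<theta>:{0<..<2*pi}|lebesgue. \<bar>bracket \<theta> a b\<bar>) = \<bar>b - a\<bar>"
proof -
  consider "a < b" | "b < a" | "a = b" by linarith
  then have "set_integrable lebesgue {0<..<2*pi} (\<lambda>\<theta>. bracket \<theta> a b)
    \<and> (LINT \<theta>:{0<..<2*pi}|lebesgue. bracket \<theta> a b) = b - a
    \<and> (LINT \<theta>:{0<..<2*pi}|lebesgue. \<bar>bracket \<theta> a b\<bar>) = \<bar>b - a\<bar>"
  proof cases
    case 1
    then show ?thesis using bracket0_integral[of a b] by (simp add: bracket_def bracket0_nonneg)
  next
    case 2
    then have "set_integrable lebesgue {0<..<2*pi} (\<lambda>\<theta>. - bracket0 \<theta> b a)"
      using bracket0_integral(1)[of b a] by (simp add: set_integrable_def)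
    then show ?thesis using 2 bracket0_integral[of b a]
      by (simp add: bracket_def bracket0_nonneg set_integral_uminus)
  next
    case 3
    then show ?thesis by (simp add: bracket_def set_integrable_def)
  qed
  then show "set_integrable lebesgue {0<..<2*pi} (\<lambda>\<theta>. bracket \<theta> a b)"
    and "(LINT \<theta>:{0<..<2*pi}|lebesgue. bracket \<theta> a b) = b - a"
    and "(LINT \<theta>:{0<..<2*pi}|lebesgue. \<bar>bracket \<theta> a b\<bar>) = \<bar>b - a\<bar>"
    by auto
qed

lemma bracket0_eq_0_if_no_translate_between:
  assumes "\<And>k::int. \<theta> + 2*pi*k \<notin> {a..b}"
  shows "bracket0 \<theta> a b = 0"
proof -
  have "{k::int. a < \<theta> + 2*pi*k \<and> \<theta> + 2*pi*k < b} = {}"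
    and "{k::int. a \<le> \<theta> + 2*pi*k \<and> \<theta> + 2*pi*k \<le> b} = {}"
    using assms by (auto simp: less_le)
  then show ?thesis by (simp add: bracket0_def del: Collect_empty_eq)
qed

lemma bracket_eq_0_if_no_translate_between:
  assumes "\<And>k::int. \<theta> + 2*pi*k \<notin> {min a b..max a b}"
  shows "bracket \<theta> a b = 0"
proof (cases "a \<le> b")
  case True
  then have "bracket0 \<theta> a b = 0"
    using assms by (intro bracket0_eq_0_if_no_translate_between) (simp add: min_def max_def)
  then show ?thesis using True by (simp add: bracket_def)
next
  case False
  then have "bracket0 \<theta> b a = 0"
    using assms by (intro bracket0_eq_0_if_no_translate_between) (simp add: min_def max_def)
  then show ?thesis using False by (simp add: bracket_def)
qed

lemma bracket_0_eq_0_near_0: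
  assumes "0 < \<theta>" "\<theta> < 2*pi" "\<bar>b\<bar> < \<theta>" "\<bar>b\<bar> < 2*pi - \<theta>"
  shows "bracket \<theta> 0 b = 0"
proof (rule bracket_eq_0_if_no_translate_between)
  fix k :: int
  show "\<theta> + 2*pi*k \<notin> {min 0 b..max 0 b}"
  proof (cases "0 \<le> k")
    case True
    then have "0 \<le> 2*pi*k" by simp
    then show ?thesis using assms by auto
  next
    case False
    then have "2*pi*k \<le> 2*pi*(-1)" by (intro mult_left_mono) auto
    then show ?thesis using assms by auto
  qed
qed

lemma bracket_series_integral:
  fixes b :: "nat \<Rightarrow> real"
  assumes "summable (\<lambda>j. \<bar>b j\<bar>)"
  shows "(\<lambda>\<theta>. \<Sum>j. bracket \<theta> 0 (b j)) absolutely_integrable_on {0<..<2*pi}"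
    and "integral {0<..<2*pi} (\<lambda>\<theta>. \<Sum>j. bracket \<theta> 0 (b j)) = (\<Sum>j. b j)"
proof -
  define A where "A = {0<..<2*pi::real}"
  define G where "G = (\<lambda>j \<theta>. indicator A \<theta> * bracket \<theta> 0 (b j))"
  have G: "integrable lebesgue (G j)" "integral\<^sup>L lebesgue (G j) = b j"
    "(LINT \<theta>|lebesgue. norm (G j \<theta>)) = \<bar>b j\<bar>" for j
    using bracket_integral[of 0 "b j"]
    by (simp_all add: G_def A_def set_integrable_def set_lebesgue_integral_def abs_mult)
  have "b \<longlonglongrightarrow> 0"
    using summable_LIMSEQ_zero[OF assms] by (simp add: tendsto_rabs_zero_iff)
  have G_eventually_0: "\<forall>\<^sub>F j in sequentially. G j \<theta> = 0" for \<theta>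
  proof (cases "\<theta> \<in> A")
    case True
    then have "0 < min \<theta> (2*pi - \<theta>)" by (simp add: A_def)
    with \<open>b \<longlonglongrightarrow> 0\<close> have "\<forall>\<^sub>F j in sequentially. dist (b j) 0 < min \<theta> (2*pi - \<theta>)"
      by (rule tendstoD)
    then show ?thesis
      by eventually_elim (use True in \<open>simp add: G_def A_def bracket_0_eq_0_near_0\<close>)
  qed (simp add: G_def)
  have summable_G: "AE \<theta> in lebesgue. summable (\<lambda>j. norm (G j \<theta>))"
  proof (rule AE_I2)
    fix \<theta>
    have "\<forall>\<^sub>F j in sequentially. norm (G j \<theta>) = 0"
      using G_eventually_0[of \<theta>] by eventually_elim simp
    from summable_cong[OF this] show "summable (\<lambda>j. norm (G j \<theta>))" by simp
  qed
  have "summable (\<lambda>j. LINT \<theta>|lebesgue. norm (G j \<theta>))"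
    unfolding G(3) by (rule assms)
  note integrable_suminf[OF G(1) summable_G this] integral_suminf[OF G(1) summable_G this]
  moreover have "(\<Sum>j. G j \<theta>) = indicator A \<theta> *\<^sub>R (\<Sum>j. bracket \<theta> 0 (b j))" for \<theta>
    by (cases "\<theta> \<in> A") (simp_all add: G_def)
  ultimately have "set_integrable lebesgue A (\<lambda>\<theta>. \<Sum>j. bracket \<theta> 0 (b j))"
    and "(LINT \<theta>:A|lebesgue. \<Sum>j. bracket \<theta> 0 (b j)) = (\<Sum>j. b j)"
    by (simp_all add: set_integrable_def set_lebesgue_integral_def G(2))
  then show "(\<lambda>\<theta>. \<Sum>j. bracket \<theta> 0 (b j)) absolutely_integrable_on {0<..<2*pi}"
    and "integral {0<..<2*pi} (\<lambda>\<theta>. \<Sum>j. bracket \<theta> 0 (b j)) = (\<Sum>j. b j)"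
    by (simp_all add: A_def set_lebesgue_integral_eq_integral)
qed

lemma ecount_eq_0_iff: "ecount s x = 0 \<longleftrightarrow> (\<forall>j. s j \<noteq> x)"
proof (cases "finite {j. s j = x}")
  case False
  then obtain j where "s j = x" using not_finite_existsD by blast
  with False show ?thesis by (auto simp: ecount_def)
qed (auto simp: ecount_def zero_enat_def)

lemma is_enum_base_imp_const:
  assumes "is_enum (base x0) t"
  shows "t j = x0"
proof (rule ccontr)
  assume "t j \<noteq> x0"
  then have "ecount t (t j) = 0"
    using assms unfolding is_enum_def by (metis base_def)
  then show False unfolding ecount_eq_0_iff by blast
qed

lemma summable_abs_if_ecount_eq:
  fixes s u :: "nat \<Rightarrow> real"
  assumes s: "summable (\<lambda>j. \<bar>s j\<bar>)"
    and ecount_eq: "\<And>x. x \<noteq> 0 \<Longrightarrow> ecount u x = ecount s x"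
  shows "summable (\<lambda>j. \<bar>u j\<bar>)"
proof (rule summableI_nonneg_bounded)
  have level_set_finite: "finite {j. s j = x}" if "x \<noteq> 0" for x
  proof -
    have "s \<longlonglongrightarrow> 0"
      using summable_LIMSEQ_zero[OF s] by (simp add: tendsto_rabs_zero_iff)
    with that have "\<forall>\<^sub>F j in sequentially. dist (s j) 0 < \<bar>x\<bar>" by (intro tendstoD) auto
    then have "\<forall>\<^sub>F j in sequentially. s j \<noteq> x" by eventually_elim auto
    then obtain N where "\<And>j. j \<ge> N \<Longrightarrow> s j \<noteq> x" by (auto simp: eventually_sequentially)
    then have "{j. s j = x} \<subseteq> {..<N}" by (auto simp: not_less[symmetric])
    then show ?thesis by (rule finite_subset) simp
  qed
  have same_level_sets: "finite {j. u j = x} \<and> card {j. u j = x} = card {j. s j = x}"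
    if "x \<noteq> 0" for x
    using ecount_eq[OF that] level_set_finite[OF that] by (auto simp: ecount_def split: if_splits)
  fix n
  define J where "J = {j. j < n \<and> u j \<noteq> 0}"
  have "finite J" by (simp add: J_def)
  have "(\<Sum>i<n. \<bar>u i\<bar>) = (\<Sum>j\<in>J. \<bar>u j\<bar>)"
    unfolding J_def by (rule sum.mono_neutral_right) auto
  also have "\<dots> = (\<Sum>x\<in>u ` J. \<Sum>j\<in>{j\<in>J. u j = x}. \<bar>u j\<bar>)"
    by (rule sum.image_gen[OF \<open>finite J\<close>])
  also have "\<dots> = (\<Sum>x\<in>u ` J. \<bar>x\<bar> * real (card {j\<in>J. u j = x}))"
    by (intro sum.cong refl) simp
  also have "\<dots> \<le> (\<Sum>x\<in>u ` J. \<bar>x\<bar> * real (card {j. s j = x}))"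
  proof (intro sum_mono mult_left_mono)
    fix x assume "x \<in> u ` J"
    then have "x \<noteq> 0" by (auto simp: J_def)
    then show "real (card {j\<in>J. u j = x}) \<le> real (card {j. s j = x})"
      using same_level_sets[OF \<open>x \<noteq> 0\<close>] card_mono[of "{j. u j = x}" "{j\<in>J. u j = x}"]
      by auto
  qed simp
  also have "\<dots> = (\<Sum>x\<in>u ` J. \<Sum>j\<in>{j. s j = x}. \<bar>s j\<bar>)"
    by (intro sum.cong refl) (simp add: mult.commute)
  also have "\<dots> = (\<Sum>j\<in>(\<Union>x\<in>u ` J. {j. s j = x}). \<bar>s j\<bar>)"
    using \<open>finite J\<close> level_set_finite by (subst sum.UNION_disjoint) (auto simp: J_def)
  also have "\<dots> \<le> (\<Sum>j. \<bar>s j\<bar>)"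
    using \<open>finite J\<close> level_set_finite by (intro sum_le_suminf[OF s]) (auto simp: J_def)
  finally show "(\<Sum>i<n. \<bar>u i\<bar>) \<le> (\<Sum>j. \<bar>s j\<bar>)" .
qed simp

lemma S1_R_has_summable_enum:
  assumes "M \<in> S1_R"
  obtains s where "is_enum M s" "summable (\<lambda>j. \<bar>s j\<bar>)"
proof -
  have "rdist dist M (base 0) < \<infinity>" using assms by (simp add: S1_R_def S1_def)
  then obtain s t where "is_enum M s" "is_enum (base 0) t"
    and "(\<Sum>j. ennreal (dist (s j) (t j))) < \<infinity>"
    by (auto simp: rdist_def INF_less_iff)
  moreover from \<open>is_enum (base 0) t\<close> have "t j = 0" for j by (rule is_enum_base_imp_const)
  ultimately have "(\<Sum>j. ennreal \<bar>s j\<bar>) \<noteq> top" by (simp add: dist_real_def)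
  then have "summable (\<lambda>j. \<bar>s j\<bar>)" by (intro summable_suminf_not_top) auto
  with \<open>is_enum M s\<close> show thesis by (rule that)
qed

lemma cont_enum_ecount:
  assumes "cont_enum St th" "r \<in> {0..1}" "x \<noteq> 0"
  shows "St r x = ecount (\<lambda>j. th j r) x"
  using assms by (simp add: cont_enum_def)

lemma cont_enum_start_base:
  assumes "cont_enum St th" "St 0 = base 0"
  shows "th j 0 = 0"
proof (rule ccontr)
  assume "th j 0 \<noteq> 0"
  then have "ecount (\<lambda>j. th j 0) (th j 0) = 0"
    using assms(2) cont_enum_ecount[OF assms(1), of 0 "th j 0"] by (simp add: base_def)
  then show False unfolding ecount_eq_0_iff by blast
qed

lemma cont_enum_summable_end:
  assumes "cont_enum St th" "St 1 \<in> S1_R"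
  shows "summable (\<lambda>j. \<bar>th j 1\<bar>)"
proof -
  obtain s where s: "is_enum (St 1) s" "summable (\<lambda>j. \<bar>s j\<bar>)"
    using S1_R_has_summable_enum[OF assms(2)] .
  have "ecount (\<lambda>j. th j 1) x = ecount s x" if "x \<noteq> 0" for x
    using cont_enum_ecount[OF assms(1) _ that, of 1] s(1) by (simp add: is_enum_def)
  then show ?thesis by (rule summable_abs_if_ecount_eq[OF s(2)])
qed

theorem mainTheorem12:
  fixes S :: "real \<Rightarrow> complex rigged" and St :: "real \<Rightarrow> real rigged"
    and th :: "nat \<Rightarrow> real \<Rightarrow> real"
  assumes "rpath S1_T arcdist S" and "S 0 = base 1"
    and "rpath S1_R dist St" and "St 0 = base 0"
    and "\<forall>r\<in>{0..1}. pmap (St r) = S r"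
    and "cont_enum St th"
  shows "mu th absolutely_integrable_on {0<..<2*pi}
    \<and> integral {0<..<2*pi} (mu th) = (\<Sum>j. th j 1)"
proof -
  have "St 1 \<in> S1_R" using assms(3) by (simp add: rpath_def)
  with assms(6) have "summable (\<lambda>j. \<bar>th j 1\<bar>)" by (rule cont_enum_summable_end)
  moreover have "mu th = (\<lambda>\<theta>. \<Sum>j. bracket \<theta> 0 (th j 1))"
    using cont_enum_start_base[OF assms(6,4)] by (simp add: mu_def fun_eq_iff)
  ultimately show ?thesis using bracket_series_integral by simp
qed

end
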